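(* Let $V$ be a Whittaker module of type $\eta$ over $R$ with cyclic Whittaker vector $w$. Write $Z_V=(p(\Omega))$ where $p=\prod_{i=1}^m p_i^{n_i}$ with $p_1,\dots,p_m$ pairwise non-associate irreducible polynomials and $n_i\ge1$. For $i=1,\dots,m$ set $V_i=R\prod_{j\neq i}p_j(\Omega)^{n_j}w$. Then each $V_i$ is an indecomposable submodule of $V$, and \[ V=V_1\oplus\cdots\oplus V_m . \]
   Context: Let $f\in\mathbb{C}[H]$ be a polynomial. $R=R(f)$ is the associative $\mathbb{C}$-algebra generated by $E,F,H$ with relations $EF-FE=f(H)$, $HE-EH=E$, $HF-FH=-F$. Let $u\in\mathbb{C}[H]$ satisfy $f(H)=\tfrac12(u(H+1)-u(H))$ and $\Omega=2FE+u(H+1)$; the center $Z(R)$ is the polynomial ring $\mathbb{C}[\Omega]$. Let $R(E)=\mathbb{C}[E]$ and fix an algebra homomorphism $\eta:R(E)\to\mathbb{C}$ with $\eta(E)\neq0$. A vector $v$ of an $R$-module $V$ is a Whittaker vector of type $\eta$ if $Ev=\eta(E)v$; $V$ is a Whittaker module of type $\eta$ with cyclic Whittaker vector $w$ if $w$ is a Whittaker vector and $V=Rw$. $Z_V=\mathrm{Ann}_R(V)\cap Z(R)$. *)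

theory Defs
  imports "HOL-Computational_Algebra.Computational_Algebra"
begin

text \<open>An R(f)-module is modelled as a complex vector space (type 'v with scalar
multiplication s) together with linear operators E, F, H satisfying the defining
relations of R(f).  The whole type 'v is the module V.\<close>

definition op_poly :: "(complex \<Rightarrow> 'v \<Rightarrow> 'v) \<Rightarrow> complex poly \<Rightarrow> ('v \<Rightarrow> 'v) \<Rightarrow> 'v \<Rightarrow> 'v::ab_group_add"
  where "op_poly s q T v = (\<Sum>i\<le>degree q. s (coeff q i) ((T ^^ i) v))"

definition R_module ::
  "(complex \<Rightarrow> 'v \<Rightarrow> 'v) \<Rightarrow> complex poly \<Rightarrow> ('v \<Rightarrow> 'v) \<Rightarrow> ('v \<Rightarrow> 'v) \<Rightarrow> ('v::ab_group_add \<Rightarrow> 'v) \<Rightarrow> bool"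
  where "R_module s f E F H \<longleftrightarrow>
     vector_space s \<and>
     Vector_Spaces.linear s s E \<and> Vector_Spaces.linear s s F \<and> Vector_Spaces.linear s s H \<and>
     (\<forall>v. E (F v) - F (E v) = op_poly s f H v) \<and>
     (\<forall>v. H (E v) - E (H v) = E v) \<and>
     (\<forall>v. H (F v) - F (H v) = - F v)"

definition Omega_op ::
  "(complex \<Rightarrow> 'v \<Rightarrow> 'v) \<Rightarrow> complex poly \<Rightarrow> ('v \<Rightarrow> 'v) \<Rightarrow> ('v \<Rightarrow> 'v) \<Rightarrow> ('v \<Rightarrow> 'v) \<Rightarrow> 'v \<Rightarrow> 'v::ab_group_add"
  where "Omega_op s u E F H v = s 2 (F (E v)) + op_poly s u (\<lambda>x. H x + x) v"

definition is_submodule ::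
  "(complex \<Rightarrow> 'v \<Rightarrow> 'v) \<Rightarrow> ('v \<Rightarrow> 'v) \<Rightarrow> ('v \<Rightarrow> 'v) \<Rightarrow> ('v \<Rightarrow> 'v) \<Rightarrow> 'v::ab_group_add set \<Rightarrow> bool"
  where "is_submodule s E F H W \<longleftrightarrow> module.subspace s W \<and>
     (\<forall>x\<in>W. E x \<in> W \<and> F x \<in> W \<and> H x \<in> W)"

definition cyclic_sub ::
  "(complex \<Rightarrow> 'v \<Rightarrow> 'v) \<Rightarrow> ('v \<Rightarrow> 'v) \<Rightarrow> ('v \<Rightarrow> 'v) \<Rightarrow> ('v \<Rightarrow> 'v) \<Rightarrow> 'v \<Rightarrow> 'v::ab_group_add set"
  where "cyclic_sub s E F H x = \<Inter> {W. is_submodule s E F H W \<and> x \<in> W}"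

definition indecomposable_sub ::
  "(complex \<Rightarrow> 'v \<Rightarrow> 'v) \<Rightarrow> ('v \<Rightarrow> 'v) \<Rightarrow> ('v \<Rightarrow> 'v) \<Rightarrow> ('v \<Rightarrow> 'v) \<Rightarrow> 'v::ab_group_add set \<Rightarrow> bool"
  where "indecomposable_sub s E F H W \<longleftrightarrow> is_submodule s E F H W \<and> W \<noteq> {0} \<and>
     \<not> (\<exists>A B. is_submodule s E F H A \<and> is_submodule s E F H B \<and> A \<noteq> {0} \<and> B \<noteq> {0} \<and>
            A \<inter> B = {0} \<and> W = {a + b | a b. a \<in> A \<and> b \<in> B})"

definition internal_direct_sum :: "nat \<Rightarrow> (nat \<Rightarrow> 'v::ab_group_add set) \<Rightarrow> bool"
  where "internal_direct_sum m W \<longleftrightarrow>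
     (\<forall>v. \<exists>g. (\<forall>i<m. g i \<in> W i) \<and> v = (\<Sum>i<m. g i)) \<and>
     (\<forall>g. (\<forall>i<m. g i \<in> W i) \<and> (\<Sum>i<m. g i) = 0 \<longrightarrow> (\<forall>i<m. g i = 0))"

end

theory Submission
  imports Defs "HOL-Computational_Algebra.Field_as_Ring"
begin

text \<open>
  The Casimir element \<open>\<Omega>\<close> is central, so every polynomial \<open>g(\<Omega>)\<close> is an \<open>R\<close>-endomorphism;
  as \<open>V = R w\<close>, it vanishes on \<open>V\<close> as soon as it kills \<open>w\<close>, hence \<open>g(\<Omega>) w = 0\<close> iff \<open>p\<close> divides \<open>g\<close>.

  The key fact is that every Whittaker vector of \<open>V\<close> lies in \<open>\<complex>[\<Omega>] w\<close>.  The module is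
  exhausted by the filtration \<open>M\<^sub>0 = 0\<close>, \<open>M\<^sub>n\<^sub>+\<^sub>1 = \<complex>[\<Omega>] w + H M\<^sub>n\<close> (it is stable under
  \<open>F\<close> because \<open>\<Omega> = 2 \<eta>(E) F + u(H+1)\<close> on \<open>\<complex>[\<Omega>] w\<close>), and \<open>D = E - \<eta>(E)\<close> satisfies
  \<open>D\<^sup>n\<^sup>+\<^sup>1 H = H D\<^sup>n\<^sup>+\<^sup>1 - (n+1) D\<^sup>n\<^sup>+\<^sup>1 - (n+1) \<eta>(E) D\<^sup>n\<close>; since \<open>\<eta>(E) \<noteq> 0\<close>, a vector of \<open>M\<^sub>n\<^sub>+\<^sub>1\<close>
  killed by \<open>D\<^sup>n\<close> already lies in \<open>M\<^sub>n\<close>, and a Whittaker vector descends to \<open>M\<^sub>1 = \<complex>[\<Omega>] w\<close>.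

  With \<open>Q\<^sub>i = \<Prod>\<^sub>j\<^sub>\<noteq>\<^sub>i p\<^sub>j\<^sup>n\<^sup>j\<close>, a Bezout identity \<open>\<Sum> a\<^sub>i Q\<^sub>i = 1\<close> yields projections
  \<open>(a\<^sub>i Q\<^sub>i)(\<Omega>)\<close> onto the \<open>V\<^sub>i\<close>, so \<open>V\<close> is their direct sum.  If \<open>V\<^sub>i = A \<oplus> B\<close>, the components of the
  generator \<open>Q\<^sub>i(\<Omega>) w\<close> are Whittaker vectors \<open>\<alpha>(\<Omega>) w\<close> and \<open>\<beta>(\<Omega>) w\<close> with
  \<open>\<alpha>\<beta> \<equiv> 0\<close> and \<open>\<alpha> + \<beta> \<equiv> Q\<^sub>i\<close> modulo \<open>p\<close>.  Both are divisible by \<open>Q\<^sub>i\<close>, since \<open>p\<^sub>i\<^sup>n\<^sup>i(\<Omega>)\<close> kills \<open>V\<^sub>i\<close>, and the cofactors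
  are complementary idempotents modulo \<open>p\<^sub>i\<^sup>n\<^sup>i\<close>; these are trivial because
  \<open>\<complex>[x]/(p\<^sub>i\<^sup>n\<^sup>i)\<close> is local, so \<open>A\<close> or \<open>B\<close> is zero.
\<close>

section \<open>Divisibility in factorial rings\<close>

lemma irreducible_not_associated_imp_coprime:
  fixes p q :: "'a::factorial_ring_gcd"
  assumes p: "irreducible p" and q: "irreducible q" and not_associated: "\<not> (p dvd q \<and> q dvd p)"
  shows "coprime p q"
proof -
  have "\<not> p dvd q"
  proof
    assume "p dvd q"
    then obtain k where k: "q = p * k" ..
    then have "is_unit k"
      using irreducibleD[OF q k] irreducible_not_unit[OF p] by blast
    then have "q dvd p"
      using k by (simp add: dvd_mult_unit_iff)
    then show False
      using not_associated \<open>p dvd q\<close> by blast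
  qed
  then show ?thesis
    using p by (simp add: prime_elem_imp_coprime prime_elem_iff_irreducible)
qed

lemma prime_power_dvd_idempotent:
  fixes p a b :: "'a::factorial_ring_gcd"
  assumes p: "prime_elem p" and ab: "p ^ k dvd a * b" and sum: "p ^ k dvd 1 - a - b"
  shows "p ^ k dvd a \<or> p ^ k dvd b"
proof (cases "k = 0")
  case False
  then have p_dvd: "p dvd p ^ k"
    by (simp add: dvd_power)
  have "\<not> (p dvd a \<and> p dvd b)"
  proof
    assume "p dvd a \<and> p dvd b"
    moreover have "p dvd 1 - a - b"
      using p_dvd sum by (rule dvd_trans)
    ultimately have "p dvd (1 - a - b) + a + b"
      by (meson dvd_add)
    then show False
      using prime_elem_not_unit[OF p] by simp
  qed
  then consider "\<not> p dvd a" | "\<not> p dvd b"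
    by blast
  then show ?thesis
  proof cases
    case 1
    then have "coprime (p ^ k) a"
      by (simp add: prime_elem_imp_coprime[OF p])
    then show ?thesis
      using ab by (simp add: coprime_dvd_mult_right_iff)
  next
    case 2
    then have "coprime (p ^ k) b"
      by (simp add: prime_elem_imp_coprime[OF p])
    then show ?thesis
      using ab by (simp add: coprime_dvd_mult_left_iff)
  qed
qed simp

lemma prime_power_cofactor_dvd_idempotent:
  fixes p Q \<alpha> \<beta> :: "'a::factorial_ring_gcd"
  assumes p: "prime_elem p" and coprime: "coprime (p ^ k) Q"
    and prod: "p ^ k * Q dvd \<alpha> * \<beta>" and sum: "p ^ k * Q dvd Q - \<alpha> - \<beta>"
    and "Q dvd \<alpha>" "Q dvd \<beta>"
  shows "p ^ k * Q dvd \<alpha> \<or> p ^ k * Q dvd \<beta>"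
proof (cases "Q = 0")
  case False
  obtain a b where \<alpha>: "\<alpha> = Q * a" and \<beta>: "\<beta> = Q * b"
    using \<open>Q dvd \<alpha>\<close> \<open>Q dvd \<beta>\<close> by (auto elim!: dvdE)
  have "Q * p ^ k dvd Q * (Q * (a * b))"
    using prod by (simp add: \<alpha> \<beta> ac_simps)
  then have "p ^ k dvd a * b"
    using False coprime by (simp add: coprime_dvd_mult_right_iff)
  moreover have "Q * p ^ k dvd Q * (1 - a - b)"
    using sum by (simp add: \<alpha> \<beta> algebra_simps)
  then have "p ^ k dvd 1 - a - b"
    using False by simp
  ultimately have "p ^ k dvd a \<or> p ^ k dvd b"
    by (rule prime_power_dvd_idempotent[OF p])
  then show ?thesis
    by (auto simp: \<alpha> \<beta> mult.commute[of "p ^ k"])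
qed (use assms in auto)

lemma coprime_cofactors_bezout:
  fixes q :: "'b \<Rightarrow> 'a::euclidean_ring_gcd"
  assumes "finite I" "I \<noteq> {}" "\<And>i j. i \<in> I \<Longrightarrow> j \<in> I \<Longrightarrow> i \<noteq> j \<Longrightarrow> coprime (q i) (q j)"
  shows "\<exists>a. (\<Sum>i\<in>I. a i * (\<Prod>j\<in>I - {i}. q j)) = 1"
  using assms
proof (induct I rule: finite_ne_induct)
  case (singleton i)
  show ?case
    by (rule exI[of _ "\<lambda>_. 1"]) simp
next
  case (insert k I)
  obtain a where a: "(\<Sum>i\<in>I. a i * (\<Prod>j\<in>I - {i}. q j)) = 1"
    using insert by auto
  define x y where "x = fst (bezout_coefficients (q k) (\<Prod>j\<in>I. q j))"
    and "y = snd (bezout_coefficients (q k) (\<Prod>j\<in>I. q j))"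
  have "coprime (q k) (\<Prod>j\<in>I. q j)"
    using insert by (auto intro!: prod_coprime_right)
  then have bezout: "x * q k + y * (\<Prod>j\<in>I. q j) = 1"
    using bezout_coefficients_fst_snd[of "q k" "\<Prod>j\<in>I. q j"]
    by (simp add: x_def y_def coprime_iff_gcd_eq_1)
  have cofactor: "(\<Prod>j\<in>insert k I - {i}. q j) = q k * (\<Prod>j\<in>I - {i}. q j)" if "i \<in> I" for i
  proof -
    have "insert k I - {i} = insert k (I - {i})"
      using that insert.hyps by auto
    then show ?thesis
      using insert.hyps by simp
  qed
  define a' where "a' i = (if i = k then y else x * a i)" for i
  have "(\<Sum>i\<in>I. a' i * (\<Prod>j\<in>insert k I - {i}. q j))
      = (\<Sum>i\<in>I. x * q k * (a i * (\<Prod>j\<in>I - {i}. q j)))"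
    using insert.hyps by (intro sum.cong) (auto simp: a'_def cofactor)
  also have "\<dots> = x * q k * (\<Sum>i\<in>I. a i * (\<Prod>j\<in>I - {i}. q j))"
    by (simp add: sum_distrib_left)
  finally have "(\<Sum>i\<in>I. a' i * (\<Prod>j\<in>insert k I - {i}. q j)) = x * q k"
    using a by simp
  moreover have "insert k I - {k} = I"
    using insert.hyps by auto
  ultimately have "(\<Sum>i\<in>insert k I. a' i * (\<Prod>j\<in>insert k I - {i}. q j)) = 1"
    using insert.hyps bezout by (simp add: a'_def ac_simps)
  then show ?case
    by blast
qed

section \<open>Polynomials in a linear operator\<close>

locale complex_vector_space = vector_space s for s :: "complex \<Rightarrow> 'v::ab_group_add \<Rightarrow> 'v"
begin

lemma op_poly_eq_sum_lessThan:
  assumes "degree q < N"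
  shows "op_poly s q T v = (\<Sum>i<N. s (coeff q i) ((T ^^ i) v))"
proof -
  have "op_poly s q T v = (\<Sum>i<Suc (degree q). s (coeff q i) ((T ^^ i) v))"
    unfolding op_poly_def by (simp add: lessThan_Suc_atMost)
  also have "\<dots> = (\<Sum>i<N. s (coeff q i) ((T ^^ i) v))"
    by (rule sum.mono_neutral_left) (use assms in \<open>auto simp: coeff_eq_0\<close>)
  finally show ?thesis .
qed

lemma op_poly_0 [simp]: "op_poly s 0 T v = 0"
  by (simp add: op_poly_def)

lemma op_poly_1 [simp]: "op_poly s 1 T v = v"
  by (simp add: op_poly_def)

lemma op_poly_const: "op_poly s [:a:] T v = s a v"
  by (simp add: op_poly_def)

context
  fixes T :: "'v \<Rightarrow> 'v"
  assumes T: "Vector_Spaces.linear s s T"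
begin

interpretation T: Vector_Spaces.linear s s T by (fact T)

lemma op_poly_pCons: "op_poly s (pCons a q) T v = s a v + T (op_poly s q T v)"
proof -
  let ?N = "Suc (degree q)"
  have "op_poly s (pCons a q) T v = (\<Sum>i<Suc ?N. s (coeff (pCons a q) i) ((T ^^ i) v))"
    using degree_pCons_le[of a q] by (intro op_poly_eq_sum_lessThan) simp
  also have "\<dots> = s a v + (\<Sum>i<?N. s (coeff q i) ((T ^^ Suc i) v))"
    by (subst sum.lessThan_Suc_shift) simp
  also have "(\<Sum>i<?N. s (coeff q i) ((T ^^ Suc i) v)) = T (\<Sum>i<?N. s (coeff q i) ((T ^^ i) v))"
    by (simp add: T.sum T.scale del: sum.lessThan_Suc)
  also have "(\<Sum>i<?N. s (coeff q i) ((T ^^ i) v)) = op_poly s q T v"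
    by (rule op_poly_eq_sum_lessThan[symmetric]) simp
  finally show ?thesis .
qed

lemma linear_op_poly: "Vector_Spaces.linear s s (op_poly s q T)"
proof (induct q rule: pCons_induct)
  case 0
  show ?case by (rule linear_module_homI) (simp add: module_hom_iff module_axioms)
next
  case (pCons a p)
  interpret p: Vector_Spaces.linear s s "op_poly s p T" by (fact pCons.hyps(2))
  show ?case
    by (rule linear_module_homI)
       (simp add: module_hom_iff module_axioms op_poly_pCons p.add p.scale T.add T.scale
        scale_right_distrib scale_left_commute)
qed

lemma op_poly_scale_right: "op_poly s q T (s a v) = s a (op_poly s q T v)"
proof -
  interpret Q: Vector_Spaces.linear s s "op_poly s q T" by (rule linear_op_poly)
  show ?thesis by (rule Q.scale)
qed

lemma op_poly_add: "op_poly s (p + q) T v = op_poly s p T v + op_poly s q T v"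
proof (induct p arbitrary: q rule: pCons_induct)
  case (pCons a p)
  obtain b q' where "q = pCons b q'" by (cases q)
  then show ?case by (simp add: op_poly_pCons pCons.hyps T.add algebra_simps)
qed simp

lemma op_poly_smult: "op_poly s (smult a p) T v = s a (op_poly s p T v)"
  by (induct p rule: pCons_induct) (simp_all add: op_poly_pCons T.scale scale_right_distrib)

lemma op_poly_diff: "op_poly s (p - q) T v = op_poly s p T v - op_poly s q T v"
  using op_poly_add[of p "- q" v] op_poly_smult[of "- 1" q v] by simp

lemma op_poly_mult: "op_poly s (p * q) T v = op_poly s p T (op_poly s q T v)"
  by (induct p rule: pCons_induct)
     (simp_all add: op_poly_add op_poly_smult op_poly_pCons)

lemma op_poly_sum: "op_poly s (sum g A) T v = (\<Sum>a\<in>A. op_poly s (g a) T v)"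
  by (induct A rule: infinite_finite_induct) (simp_all add: op_poly_add)

lemma op_poly_pcompose: "op_poly s (pcompose p q) T v = op_poly s p (op_poly s q T) v"
proof (induct p arbitrary: v rule: pCons_induct)
  case (pCons a p)
  then show ?case
    by (simp add: pcompose_pCons op_poly_add op_poly_mult op_poly_const
        complex_vector_space.op_poly_pCons[OF complex_vector_space_axioms linear_op_poly])
qed simp

lemma op_poly_in_subspace:
  assumes "subspace W" "\<And>x. x \<in> W \<Longrightarrow> T x \<in> W" "x \<in> W"
  shows "op_poly s q T x \<in> W"
  by (induct q rule: pCons_induct)
     (simp_all add: op_poly_pCons assms subspace_0 subspace_add subspace_scale)

end

lemma op_poly_intertwine:
  assumes "Vector_Spaces.linear s s T" "Vector_Spaces.linear s s U" "Vector_Spaces.linear s s L"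
    and "\<And>x. L (T x) = U (L x)"
  shows "L (op_poly s q T v) = op_poly s q U (L v)"
proof -
  interpret L: Vector_Spaces.linear s s L by (fact assms)
  show ?thesis
    by (induct q rule: pCons_induct) (simp_all add: op_poly_pCons assms L.add L.scale)
qed

section \<open>Submodules and internal direct sums\<close>

lemma is_submodule_cyclic_sub: "is_submodule s E F H (cyclic_sub s E F H x)"
  unfolding cyclic_sub_def is_submodule_def by (auto intro!: subspace_Inter)

lemma mem_cyclic_sub: "x \<in> cyclic_sub s E F H x"
  unfolding cyclic_sub_def by auto

lemma cyclic_sub_least: "is_submodule s E F H W \<Longrightarrow> x \<in> W \<Longrightarrow> cyclic_sub s E F H x \<subseteq> W"
  unfolding cyclic_sub_def by auto

lemma internal_direct_sumI_projections:
  assumes linear: "\<And>i. i < m \<Longrightarrow> Vector_Spaces.linear s s (\<pi> i)"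
    and decomposition: "\<And>v. (\<Sum>i<m. \<pi> i v) = v"
    and range: "\<And>i v. i < m \<Longrightarrow> \<pi> i v \<in> W i"
    and kills: "\<And>i j x. i < m \<Longrightarrow> j < m \<Longrightarrow> i \<noteq> j \<Longrightarrow> x \<in> W j \<Longrightarrow> \<pi> i x = 0"
  shows "internal_direct_sum m W"
  unfolding internal_direct_sum_def
proof (intro conjI allI impI)
  fix v
  show "\<exists>g. (\<forall>i<m. g i \<in> W i) \<and> v = (\<Sum>i<m. g i)"
    using range decomposition by (intro exI[of _ "\<lambda>i. \<pi> i v"]) auto
next
  fix g k
  assume g: "(\<forall>i<m. g i \<in> W i) \<and> (\<Sum>i<m. g i) = 0" and k: "k < m"
  interpret \<pi>: Vector_Spaces.linear s s "\<pi> k" by (rule linear[OF k])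
  have other_terms: "(\<Sum>i\<in>{..<m} - {k}. \<pi> i (g k)) = 0" "(\<Sum>j\<in>{..<m} - {k}. \<pi> k (g j)) = 0"
    using k g kills by (auto intro!: sum.neutral)
  have "g k = (\<Sum>i<m. \<pi> i (g k))"
    by (rule decomposition[symmetric])
  also have "\<dots> = \<pi> k (g k)"
    using k other_terms(1) by (simp add: sum.remove)
  also have "\<dots> = (\<Sum>j<m. \<pi> k (g j))"
    using k other_terms(2) by (simp add: sum.remove)
  also have "\<dots> = 0"
    using g by (simp add: \<pi>.sum[symmetric])
  finally show "g k = 0" .
qed

lemma cyclic_sub_disjoint_subset_zero:
  assumes "X \<subseteq> cyclic_sub s E F H x" "is_submodule s E F H Y" "x \<in> Y" "X \<inter> Y = {0}"
  shows "X \<subseteq> {0}"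
  using assms cyclic_sub_least[OF assms(2,3)] by blast

end

section \<open>The Casimir element\<close>

locale Rf_module = complex_vector_space s for s :: "complex \<Rightarrow> 'v::ab_group_add \<Rightarrow> 'v" +
  fixes f u :: "complex poly" and E F H :: "'v \<Rightarrow> 'v"
  assumes module_relations: "R_module s f E F H"
    and f_u: "f = smult (1/2) (pcompose u [:1, 1:] - u)"
begin

abbreviation \<Omega> :: "'v \<Rightarrow> 'v" where "\<Omega> \<equiv> Omega_op s u E F H"

lemma linear_E: "Vector_Spaces.linear s s E"
  and linear_F: "Vector_Spaces.linear s s F"
  and linear_H: "Vector_Spaces.linear s s H"
  and commutator_EF: "E (F v) - F (E v) = op_poly s f H v"
  and commutator_HE: "H (E v) - E (H v) = E v"
  and commutator_HF: "H (F v) - F (H v) = - F v"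
  using module_relations by (simp_all add: R_module_def)

sublocale E: Vector_Spaces.linear s s E by (fact linear_E)
sublocale F: Vector_Spaces.linear s s F by (fact linear_F)
sublocale H: Vector_Spaces.linear s s H by (fact linear_H)

lemma op_poly_shift_H: "op_poly s [:a, 1:] H v = H v + s a v"
  by (simp add: op_poly_pCons[OF linear_H] op_poly_const add.commute)

lemma E_op_poly_H: "E (op_poly s q H v) = op_poly s (pcompose q [:-1, 1:]) H (E v)"
proof -
  have "E (H x) = op_poly s [:-1, 1:] H (E x)" for x
    using commutator_HE[of x] by (simp add: op_poly_shift_H algebra_simps)
  then show ?thesis
    by (simp add: op_poly_intertwine[OF linear_H linear_op_poly[OF linear_H] linear_E]
        op_poly_pcompose[OF linear_H])
qed

lemma F_op_poly_H: "F (op_poly s q H v) = op_poly s (pcompose q [:1, 1:]) H (F v)"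
proof -
  have "F (H x) = op_poly s [:1, 1:] H (F x)" for x
    using commutator_HF[of x] by (simp add: op_poly_shift_H algebra_simps)
  then show ?thesis
    by (simp add: op_poly_intertwine[OF linear_H linear_op_poly[OF linear_H] linear_F]
        op_poly_pcompose[OF linear_H])
qed

lemma H_op_poly_H: "H (op_poly s q H v) = op_poly s q H (H v)"
  by (simp add: op_poly_intertwine[OF linear_H linear_H linear_H])

lemma Omega_eq: "\<Omega> v = s 2 (F (E v)) + op_poly s (pcompose u [:1, 1:]) H v"
proof -
  have "(\<lambda>x. H x + x) = op_poly s [:1, 1:] H"
    by (simp add: op_poly_shift_H fun_eq_iff)
  then show ?thesis
    by (simp add: Omega_op_def op_poly_pcompose[OF linear_H])
qed

lemma two_EF: "s 2 (E (F v)) = s 2 (F (E v)) + (op_poly s (pcompose u [:1, 1:]) H v - op_poly s u H v)"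
proof -
  have "E (F v) = F (E v) + op_poly s f H v"
    using commutator_EF[of v] by (simp add: algebra_simps)
  then show ?thesis
    by (simp add: scale_right_distrib f_u op_poly_smult[OF linear_H] op_poly_diff[OF linear_H])
qed

lemma Omega_E: "E (\<Omega> v) = \<Omega> (E v)"
proof -
  have "pcompose (pcompose u [:1, 1:]) [:-1, 1:] = u"
    by (simp add: pcompose_assoc[symmetric] pcompose_pCons)
  then have "E (\<Omega> v) = s 2 (E (F (E v))) + op_poly s u H (E v)"
    by (simp add: Omega_eq E.add E.scale E_op_poly_H)
  also have "\<dots> = \<Omega> (E v)"
    by (simp add: Omega_eq two_EF)
  finally show ?thesis .
qed

lemma Omega_F: "F (\<Omega> v) = \<Omega> (F v)"
proof -
  have "F (\<Omega> v) = s 2 (F (F (E v))) + op_poly s (pcompose (pcompose u [:1, 1:]) [:1, 1:]) H (F v)"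
    by (simp add: Omega_eq F.add F.scale F_op_poly_H)
  also have "\<dots> = \<Omega> (F v)"
    using arg_cong[OF two_EF[of v], of F] by (simp add: Omega_eq F.scale F.add F.diff F_op_poly_H)
  finally show ?thesis .
qed

lemma Omega_H: "H (\<Omega> v) = \<Omega> (H v)"
proof -
  have "H (F x) = F (H x - x)" for x
    using commutator_HF[of x] by (simp add: F.diff algebra_simps)
  moreover have "E (H x) = H (E x) - E x" for x
    using commutator_HE[of x] by (simp add: algebra_simps)
  ultimately show ?thesis
    by (simp add: Omega_eq H.add H.scale H_op_poly_H)
qed

lemma linear_Omega: "Vector_Spaces.linear s s \<Omega>"
proof -
  interpret U: Vector_Spaces.linear s s "op_poly s (pcompose u [:1, 1:]) H"
    by (rule linear_op_poly[OF linear_H])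
  show ?thesis
    by (rule linear_module_homI)
       (simp add: module_hom_iff module_axioms Omega_eq E.add F.add E.scale F.scale U.add U.scale
        scale_right_distrib scale_left_commute)
qed

lemma op_poly_Omega_commute:
  shows "E (op_poly s g \<Omega> v) = op_poly s g \<Omega> (E v)"
    and "F (op_poly s g \<Omega> v) = op_poly s g \<Omega> (F v)"
    and "H (op_poly s g \<Omega> v) = op_poly s g \<Omega> (H v)"
  by (simp_all add: op_poly_intertwine[OF linear_Omega linear_Omega] linear_E linear_F linear_H
      Omega_E Omega_F Omega_H)

lemma is_submodule_zero: "is_submodule s E F H {0}"
  by (simp add: is_submodule_def)

lemma Omega_mem_submodule:
  assumes "is_submodule s E F H W" "x \<in> W"
  shows "\<Omega> x \<in> W"
  using assms
  by (auto simp: is_submodule_def Omega_eq intro!: subspace_add subspace_scale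
      op_poly_in_subspace[OF linear_H])

lemma op_poly_Omega_mem_submodule:
  assumes "is_submodule s E F H W" "x \<in> W"
  shows "op_poly s g \<Omega> x \<in> W"
  using assms Omega_mem_submodule[OF assms(1)]
  by (intro op_poly_in_subspace[OF linear_Omega]) (auto simp: is_submodule_def)

lemma is_submodule_op_poly_Omega_vimage:
  assumes "is_submodule s E F H W"
  shows "is_submodule s E F H {v. op_poly s g \<Omega> v \<in> W}"
proof -
  interpret G: Vector_Spaces.linear s s "op_poly s g \<Omega>"
    by (rule linear_op_poly[OF linear_Omega])
  have "subspace (op_poly s g \<Omega> -` W)"
    using assms by (intro G.subspace_vimage) (simp add: is_submodule_def)
  then show ?thesis
    using assms by (simp add: is_submodule_def vimage_def op_poly_Omega_commute[symmetric])
qed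

lemma whittaker_direct_summand:
  assumes A: "is_submodule s E F H A" and B: "is_submodule s E F H B" and AB: "A \<inter> B = {0}"
    and z: "E z = s c z" "z = a + b" and a: "a \<in> A" and b: "b \<in> B"
  shows "E a = s c a"
proof -
  have "E a - s c a \<in> A" "E b - s c b \<in> B"
    using A B a b by (auto simp: is_submodule_def intro!: subspace_diff subspace_scale)
  moreover have "E a - s c a = - (E b - s c b)"
    using z by (simp add: E.add scale_right_distrib algebra_simps)
  moreover have "- (E b - s c b) \<in> B"
    using B \<open>E b - s c b \<in> B\<close> by (intro subspace_neg) (auto simp: is_submodule_def)
  ultimately have "E a - s c a \<in> A \<inter> B"
    by simp
  then show ?thesis
    using AB by simp
qed

end

section \<open>Whittaker vectors\<close>

locale Rf_whittaker_module = Rf_module s f u E F H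
  for s :: "complex \<Rightarrow> 'v::ab_group_add \<Rightarrow> 'v" and f u E F H +
  fixes c :: complex and w :: 'v
  assumes c_nonzero: "c \<noteq> 0"
    and whittaker_w: "E w = s c w"
    and cyclic_w: "cyclic_sub s E F H w = UNIV"
begin

lemma op_poly_Omega_mem_submodule_of_w:
  assumes "is_submodule s E F H W" "op_poly s g \<Omega> w \<in> W"
  shows "op_poly s g \<Omega> v \<in> W"
  using cyclic_sub_least[OF is_submodule_op_poly_Omega_vimage[OF assms(1)], of w] assms(2) cyclic_w
  by auto

lemma op_poly_Omega_eq_0_of_w: "op_poly s g \<Omega> w = 0 \<Longrightarrow> op_poly s g \<Omega> v = 0"
  using op_poly_Omega_mem_submodule_of_w[OF is_submodule_zero] by simp

definition Omega_span :: "'v set" where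
  "Omega_span = range (\<lambda>g. op_poly s g \<Omega> w)"

lemma subspace_Omega_span: "subspace Omega_span"
proof (rule subspaceI)
  show "0 \<in> Omega_span"
    using op_poly_0 unfolding Omega_span_def by (metis rangeI)
next
  fix x y assume "x \<in> Omega_span" "y \<in> Omega_span"
  then show "x + y \<in> Omega_span"
    unfolding Omega_span_def by (auto simp: op_poly_add[OF linear_Omega, symmetric])
next
  fix a x assume "x \<in> Omega_span"
  then show "s a x \<in> Omega_span"
    unfolding Omega_span_def by (auto simp: op_poly_smult[OF linear_Omega, symmetric])
qed

lemma w_in_Omega_span: "w \<in> Omega_span"
  unfolding Omega_span_def using op_poly_1 by (metis rangeI)

lemma Omega_in_Omega_span:
  assumes "x \<in> Omega_span"
  shows "\<Omega> x \<in> Omega_span"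
proof -
  obtain g where "x = op_poly s g \<Omega> w"
    using assms unfolding Omega_span_def by auto
  then have "\<Omega> x = op_poly s (pCons 0 g) \<Omega> w"
    by (simp add: op_poly_pCons[OF linear_Omega])
  then show ?thesis
    unfolding Omega_span_def by (metis rangeI)
qed

lemma E_on_Omega_span: "x \<in> Omega_span \<Longrightarrow> E x = s c x"
  unfolding Omega_span_def
  by (auto simp: op_poly_Omega_commute whittaker_w op_poly_scale_right[OF linear_Omega])

definition E_c :: "'v \<Rightarrow> 'v" where
  "E_c v = E v - s c v"

lemma linear_E_c: "Vector_Spaces.linear s s E_c"
  unfolding E_c_def[abs_def]
  by (rule linear_module_homI)
     (simp add: module_hom_iff module_axioms E.add E.scale scale_right_distrib
      scale_right_diff_distrib scale_left_commute)

sublocale E_c: Vector_Spaces.linear s s E_c by (fact linear_E_c)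

lemma E_c_pow_zero [simp]: "(E_c ^^ k) 0 = 0"
  by (induct k) simp_all

lemma E_c_pow_add: "(E_c ^^ k) (x + y) = (E_c ^^ k) x + (E_c ^^ k) y"
  by (induct k) (simp_all add: E_c.add)

lemma E_c_H: "E_c (H y) = H (E_c y) - E_c y - s c y"
  using commutator_HE[of y] by (simp add: E_c_def H.diff H.scale algebra_simps)

lemma E_c_Omega_span: "x \<in> Omega_span \<Longrightarrow> E_c x = 0"
  by (simp add: E_c_def E_on_Omega_span)

primrec H_filtration :: "nat \<Rightarrow> 'v set" where
  "H_filtration 0 = {0}"
| "H_filtration (Suc n) = {x + H y | x y. x \<in> Omega_span \<and> y \<in> H_filtration n}"

declare H_filtration.simps(2) [simp del]

lemma H_filtration_SucI:
  "x \<in> Omega_span \<Longrightarrow> y \<in> H_filtration n \<Longrightarrow> x + H y \<in> H_filtration (Suc n)"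
  by (auto simp: H_filtration.simps(2))

lemma H_filtration_SucE:
  assumes "v \<in> H_filtration (Suc n)"
  obtains x y where "v = x + H y" "x \<in> Omega_span" "y \<in> H_filtration n"
  using assms by (auto simp: H_filtration.simps(2))

lemma subspace_H_filtration: "subspace (H_filtration n)"
proof (induct n)
  case 0
  show ?case by (simp add: subspace_def)
next
  case (Suc n)
  show ?case
  proof (rule subspaceI)
    show "0 \<in> H_filtration (Suc n)"
      using H_filtration_SucI[OF subspace_0[OF subspace_Omega_span] subspace_0[OF Suc]] by simp
  next
    fix a b assume "a \<in> H_filtration (Suc n)" "b \<in> H_filtration (Suc n)"
    then obtain x y x' y' where "a = x + H y" "b = x' + H y'" "x \<in> Omega_span" "x' \<in> Omega_span"
      "y \<in> H_filtration n" "y' \<in> H_filtration n"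
      by (metis H_filtration_SucE)
    moreover have "a + b = (x + x') + H (y + y')"
      using calculation by (simp add: H.add algebra_simps)
    ultimately show "a + b \<in> H_filtration (Suc n)"
      by (metis H_filtration_SucI subspace_add[OF subspace_Omega_span] subspace_add[OF Suc])
  next
    fix k a assume "a \<in> H_filtration (Suc n)"
    then obtain x y where "a = x + H y" "x \<in> Omega_span" "y \<in> H_filtration n"
      by (metis H_filtration_SucE)
    moreover have "s k a = s k x + H (s k y)"
      using calculation by (simp add: H.scale scale_right_distrib)
    ultimately show "s k a \<in> H_filtration (Suc n)"
      by (metis H_filtration_SucI subspace_scale[OF subspace_Omega_span] subspace_scale[OF Suc])
  qed
qed

lemma Omega_span_subset_H_filtration: "x \<in> Omega_span \<Longrightarrow> x \<in> H_filtration (Suc n)"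
  using H_filtration_SucI[of x 0 n] subspace_0[OF subspace_H_filtration[of n]] by simp

lemma H_filtration_Suc_mono: "H_filtration n \<subseteq> H_filtration (Suc n)"
proof (induct n)
  case 0
  show ?case
    using Omega_span_subset_H_filtration[OF subspace_0[OF subspace_Omega_span]] by simp
next
  case (Suc n)
  then show ?case by (auto elim!: H_filtration_SucE intro!: H_filtration_SucI)
qed

lemma H_filtration_mono: "n \<le> k \<Longrightarrow> H_filtration n \<subseteq> H_filtration k"
  by (rule lift_Suc_mono_le[of H_filtration]) (use H_filtration_Suc_mono in auto)

lemma H_mem_H_filtration: "v \<in> H_filtration n \<Longrightarrow> H v \<in> H_filtration (Suc n)"
  using H_filtration_SucI[OF subspace_0[OF subspace_Omega_span], of v n] by simp

lemma E_c_H_filtration: "v \<in> H_filtration (Suc n) \<Longrightarrow> E_c v \<in> H_filtration n"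
proof (induct n arbitrary: v)
  case 0
  then show ?case by (auto simp: E_c_Omega_span elim: H_filtration_SucE)
next
  case (Suc n)
  then obtain x y where v: "v = x + H y" "x \<in> Omega_span" "y \<in> H_filtration (Suc n)"
    by (metis H_filtration_SucE)
  have E_c_y: "E_c y \<in> H_filtration n"
    using Suc.hyps[OF v(3)] .
  have "E_c v = H (E_c y) - E_c y - s c y"
    using v(1) E_c_Omega_span[OF v(2)] E_c_H[of y] by (simp add: E_c.add)
  moreover have "H (E_c y) \<in> H_filtration (Suc n)"
    using H_mem_H_filtration[OF E_c_y] .
  moreover have "E_c y \<in> H_filtration (Suc n)"
    using E_c_y H_filtration_Suc_mono by auto
  moreover have "s c y \<in> H_filtration (Suc n)"
    using subspace_scale[OF subspace_H_filtration v(3)] .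
  ultimately show ?case
    by (metis subspace_diff[OF subspace_H_filtration])
qed

lemma E_c_pow_H_filtration: "v \<in> H_filtration n \<Longrightarrow> (E_c ^^ n) v = 0"
proof (induct n arbitrary: v)
  case (Suc n)
  then show ?case
    using E_c_H_filtration by (simp only: funpow_Suc_right o_apply)
qed simp

lemma E_c_pow_H:
  "(E_c ^^ Suc k) (H y) = H ((E_c ^^ Suc k) y) - s (of_nat (Suc k)) ((E_c ^^ Suc k) y)
     - s (of_nat (Suc k) * c) ((E_c ^^ k) y)"
proof (induct k)
  case 0
  then show ?case using E_c_H[of y] by simp
next
  case (Suc k)
  let ?a = "(E_c ^^ Suc k) y" and ?b = "(E_c ^^ k) y" and ?K = "of_nat (Suc k) :: complex"
  have "(E_c ^^ Suc (Suc k)) (H y) = E_c ((E_c ^^ Suc k) (H y))"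
    by simp
  also have "\<dots> = E_c (H ?a - s ?K ?a - s (?K * c) ?b)"
    by (simp only: Suc)
  also have "\<dots> = H (E_c ?a) - E_c ?a - s c ?a - s ?K (E_c ?a) - s (?K * c) ?a"
    by (simp add: E_c.diff E_c.scale E_c_H)
  also have "\<dots> = H (E_c ?a) - s (1 + ?K) (E_c ?a) - s ((1 + ?K) * c) ?a"
    by (simp only: distrib_right mult_1 scale_left_distrib scale_one diff_diff_eq add_ac)
  finally show ?case
    by (simp only: funpow.simps o_apply of_nat_Suc[of "Suc k"] add.commute[of 1])
qed

lemma H_filtration_drop:
  assumes "y \<in> H_filtration (Suc n)" "(E_c ^^ n) y = 0"
  shows "y \<in> H_filtration n"
  using assms
proof (induct n arbitrary: y)
  case (Suc n)
  then obtain x z where y: "y = x + H z" "x \<in> Omega_span" "z \<in> H_filtration (Suc n)"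
    by (metis H_filtration_SucE)
  have "(E_c ^^ Suc n) x = 0"
    using E_c_Omega_span[OF y(2)] by (simp only: funpow_Suc_right o_apply) simp
  moreover have "(E_c ^^ Suc n) z = 0"
    by (rule E_c_pow_H_filtration[OF y(3)])
  ultimately have "(E_c ^^ Suc n) y = - s (of_nat (Suc n) * c) ((E_c ^^ n) z)"
    by (simp add: y(1) E_c_pow_add E_c_pow_H del: of_nat_Suc funpow.simps)
  then have "(E_c ^^ n) z = 0"
    using Suc.prems(2) c_nonzero by (simp del: of_nat_Suc funpow.simps)
  then have "z \<in> H_filtration n"
    by (rule Suc.hyps[OF y(3)])
  then show ?case
    using y(1,2) H_filtration_SucI by blast
qed simp

lemma whittaker_vector_in_H_filtration:
  "v \<in> H_filtration n \<Longrightarrow> E_c v = 0 \<Longrightarrow> v \<in> Omega_span"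
proof (induct n arbitrary: v)
  case 0
  then show ?case using subspace_0[OF subspace_Omega_span] by simp
next
  case (Suc n)
  show ?case
  proof (cases "n = 0")
    case True
    then show ?thesis
      using Suc.prems(1) by (auto elim: H_filtration_SucE)
  next
    case False
    then obtain k where "n = Suc k"
      using not0_implies_Suc by blast
    then have "(E_c ^^ n) v = 0"
      using \<open>E_c v = 0\<close> by (simp add: funpow_Suc_right del: funpow.simps)
    then show ?thesis
      using H_filtration_drop Suc.hyps Suc.prems by blast
  qed
qed

lemma subspace_Union_H_filtration: "subspace (\<Union>n. H_filtration n)"
proof (rule subspaceI)
  show "0 \<in> (\<Union>n. H_filtration n)"
    using H_filtration.simps(1) by blast
next
  fix x y assume "x \<in> (\<Union>n. H_filtration n)" "y \<in> (\<Union>n. H_filtration n)"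
  then obtain a b where "x \<in> H_filtration a" "y \<in> H_filtration b"
    by auto
  then have "x \<in> H_filtration (max a b)" "y \<in> H_filtration (max a b)"
    using H_filtration_mono[of a "max a b"] H_filtration_mono[of b "max a b"] by auto
  then show "x + y \<in> (\<Union>n. H_filtration n)"
    using subspace_add[OF subspace_H_filtration] by blast
next
  fix k x assume "x \<in> (\<Union>n. H_filtration n)"
  then show "s k x \<in> (\<Union>n. H_filtration n)"
    using subspace_scale[OF subspace_H_filtration] by blast
qed

lemma H_Union_H_filtration: "y \<in> (\<Union>n. H_filtration n) \<Longrightarrow> H y \<in> (\<Union>n. H_filtration n)"
  using H_mem_H_filtration by blast

lemma F_Omega_span:
  assumes x: "x \<in> Omega_span"
  shows "F x \<in> (\<Union>n. H_filtration n)"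
proof -
  let ?u1 = "op_poly s (pcompose u [:1, 1:]) H x"
  have "x \<in> (\<Union>n. H_filtration n)"
    using Omega_span_subset_H_filtration[OF x] by blast
  then have u1: "?u1 \<in> (\<Union>n. H_filtration n)"
    using op_poly_in_subspace[OF linear_H subspace_Union_H_filtration H_Union_H_filtration]
    by blast
  have Omega: "\<Omega> x \<in> (\<Union>n. H_filtration n)"
    using Omega_span_subset_H_filtration[OF Omega_in_Omega_span[OF x]] by blast
  have "F x = s (inverse (2 * c)) (\<Omega> x - ?u1)"
    using c_nonzero by (simp add: Omega_eq E_on_Omega_span[OF x] F.scale)
  then show ?thesis
    using subspace_scale[OF subspace_Union_H_filtration
        subspace_diff[OF subspace_Union_H_filtration Omega u1]]
    by simp
qed

lemma F_H_filtration: "v \<in> H_filtration n \<Longrightarrow> F v \<in> (\<Union>n. H_filtration n)"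
proof (induct n arbitrary: v)
  case 0
  then show ?case using subspace_0[OF subspace_Union_H_filtration] by simp
next
  case (Suc n)
  then obtain x y where v: "v = x + H y" "x \<in> Omega_span" "y \<in> H_filtration n"
    by (metis H_filtration_SucE)
  have "F v = F x + (H (F y) + F y)"
    using commutator_HF[of y] by (simp add: v(1) F.add algebra_simps)
  moreover have "F y \<in> (\<Union>n. H_filtration n)"
    by (rule Suc.hyps[OF v(3)])
  ultimately show ?case
    by (simp only: subspace_add[OF subspace_Union_H_filtration] F_Omega_span[OF v(2)]
        H_Union_H_filtration)
qed

lemma E_H_filtration: "v \<in> H_filtration n \<Longrightarrow> E v \<in> H_filtration n"
  using E_c_H_filtration[of v n] H_filtration_Suc_mono[of n]
    subspace_add[OF subspace_H_filtration _ subspace_scale[OF subspace_H_filtration], of "E_c v" n v c]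
  by (auto simp: E_c_def)

lemma Union_H_filtration: "(\<Union>n. H_filtration n) = UNIV"
proof -
  have "is_submodule s E F H (\<Union>n. H_filtration n)"
    unfolding is_submodule_def
  proof (intro conjI ballI subspace_Union_H_filtration)
    fix x assume "x \<in> (\<Union>n. H_filtration n)"
    then obtain n where n: "x \<in> H_filtration n"
      by blast
    show "E x \<in> (\<Union>n. H_filtration n)"
      using E_H_filtration[OF n] by blast
    show "F x \<in> (\<Union>n. H_filtration n)"
      by (rule F_H_filtration[OF n])
    show "H x \<in> (\<Union>n. H_filtration n)"
      using H_mem_H_filtration[OF n] by blast
  qed
  then have "cyclic_sub s E F H w \<subseteq> (\<Union>n. H_filtration n)"
    by (rule cyclic_sub_least) (use Omega_span_subset_H_filtration[OF w_in_Omega_span] in blast)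
  then show ?thesis
    unfolding cyclic_w by (rule top_unique[THEN iffD1])
qed

theorem whittaker_vector_in_Omega_span:
  assumes "E v = s c v"
  shows "v \<in> Omega_span"
proof -
  have "v \<in> (\<Union>n. H_filtration n)"
    by (simp only: Union_H_filtration UNIV_I)
  then obtain n where "v \<in> H_filtration n"
    by blast
  moreover have "E_c v = 0"
    using assms by (simp add: E_c_def)
  ultimately show ?thesis
    by (rule whittaker_vector_in_H_filtration)
qed

section \<open>Decomposition along the annihilator\<close>

context
  fixes P :: "complex poly"
  assumes annihilator: "\<forall>q. (\<forall>v. op_poly s q \<Omega> v = 0) \<longleftrightarrow> P dvd q"
begin

lemma op_poly_Omega_w_eq_0_iff: "op_poly s q \<Omega> w = 0 \<longleftrightarrow> P dvd q"
  using annihilator op_poly_Omega_eq_0_of_w by blast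

lemma op_poly_Omega_kills_cyclic_sub:
  assumes "P = A * Q" "A dvd g" "x \<in> cyclic_sub s E F H (op_poly s Q \<Omega> w)"
  shows "op_poly s g \<Omega> x = 0"
proof -
  have "op_poly s g \<Omega> (op_poly s Q \<Omega> w) \<in> {0}"
    using assms(1,2) op_poly_Omega_w_eq_0_iff[of "g * Q"]
    by (simp add: op_poly_mult[OF linear_Omega, symmetric])
  then have "cyclic_sub s E F H (op_poly s Q \<Omega> w) \<subseteq> {v. op_poly s g \<Omega> v \<in> {0}}"
    by (intro cyclic_sub_least is_submodule_op_poly_Omega_vimage is_submodule_zero) simp
  then show ?thesis
    using assms(3) by auto
qed

lemma cofactor_dvd_of_mem_cyclic_sub:
  assumes "P = A * Q" "A \<noteq> 0" "op_poly s \<alpha> \<Omega> w \<in> cyclic_sub s E F H (op_poly s Q \<Omega> w)"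
  shows "Q dvd \<alpha>"
proof -
  have "op_poly s (A * \<alpha>) \<Omega> w = 0"
    using op_poly_Omega_kills_cyclic_sub[OF assms(1) dvd_refl assms(3)]
    by (simp add: op_poly_mult[OF linear_Omega])
  then have "A * Q dvd A * \<alpha>"
    using assms(1) op_poly_Omega_w_eq_0_iff by simp
  then show ?thesis
    using assms(2) by simp
qed

lemma cofactor_generator_in_direct_summand:
  assumes P: "P = p ^ k * Q" and p: "prime_elem p" and coprime: "coprime (p ^ k) Q"
    and A: "is_submodule s E F H A" and B: "is_submodule s E F H B" and AB: "A \<inter> B = {0}"
    and V_sum: "cyclic_sub s E F H (op_poly s Q \<Omega> w) = {a + b | a b. a \<in> A \<and> b \<in> B}"
  shows "op_poly s Q \<Omega> w \<in> A \<or> op_poly s Q \<Omega> w \<in> B"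
proof -
  define z where "z = op_poly s Q \<Omega> w"
  obtain a b where z_sum: "z = a + b" and a: "a \<in> A" and b: "b \<in> B"
    using mem_cyclic_sub[of z E F H] by (auto simp: V_sum z_def)
  have "A \<subseteq> cyclic_sub s E F H z" "B \<subseteq> cyclic_sub s E F H z"
    using A B by (force simp: V_sum[folded z_def] is_submodule_def intro: subspace_0)+
  with a b have a_z: "a \<in> cyclic_sub s E F H z" and b_z: "b \<in> cyclic_sub s E F H z"
    by auto
  have Ez: "E z = s c z"
    by (simp add: z_def op_poly_Omega_commute whittaker_w op_poly_scale_right[OF linear_Omega])
  have "E a = s c a"
    by (rule whittaker_direct_summand[OF A B AB Ez z_sum a b])
  moreover have "E b = s c b"
    by (rule whittaker_direct_summand[OF B A _ Ez _ b a]) (use AB z_sum in auto)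
  ultimately obtain \<alpha> \<beta> where \<alpha>: "a = op_poly s \<alpha> \<Omega> w" and \<beta>: "b = op_poly s \<beta> \<Omega> w"
    using whittaker_vector_in_Omega_span unfolding Omega_span_def by blast
  have "op_poly s (\<alpha> * \<beta>) \<Omega> w = op_poly s \<alpha> \<Omega> b"
    by (simp add: \<beta> op_poly_mult[OF linear_Omega])
  moreover have "op_poly s (\<alpha> * \<beta>) \<Omega> w = op_poly s \<beta> \<Omega> a"
    by (subst mult.commute) (simp add: \<alpha> op_poly_mult[OF linear_Omega])
  ultimately have "op_poly s (\<alpha> * \<beta>) \<Omega> w \<in> A \<inter> B"
    using op_poly_Omega_mem_submodule[OF A a] op_poly_Omega_mem_submodule[OF B b] by (metis IntI)
  then have "P dvd \<alpha> * \<beta>"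
    using AB op_poly_Omega_w_eq_0_iff by auto
  moreover have "op_poly s (Q - \<alpha> - \<beta>) \<Omega> w = 0"
    using z_sum by (simp add: z_def \<alpha> \<beta> op_poly_diff[OF linear_Omega])
  then have "P dvd Q - \<alpha> - \<beta>"
    by (simp add: op_poly_Omega_w_eq_0_iff)
  moreover have "Q dvd \<alpha>" "Q dvd \<beta>"
    using cofactor_dvd_of_mem_cyclic_sub[OF P] p a_z b_z by (auto simp: z_def \<alpha> \<beta> prime_elem_def)
  ultimately have "P dvd \<alpha> \<or> P dvd \<beta>"
    unfolding P by (rule prime_power_cofactor_dvd_idempotent[OF p coprime])
  then have "a = 0 \<or> b = 0"
    by (simp add: \<alpha> \<beta> op_poly_Omega_w_eq_0_iff)
  then show ?thesis
    using z_sum a b by (auto simp: z_def)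
qed

lemma indecomposable_cyclic_sub_cofactor:
  assumes P: "P = p ^ k * Q" and p: "prime_elem p" and k: "k \<noteq> 0"
    and coprime: "coprime (p ^ k) Q" and Q: "Q \<noteq> 0"
  shows "indecomposable_sub s E F H (cyclic_sub s E F H (op_poly s Q \<Omega> w))"
proof -
  define V where "V = cyclic_sub s E F H (op_poly s Q \<Omega> w)"
  have "\<not> P dvd Q"
  proof
    assume "P dvd Q"
    then have "is_unit (p ^ k)"
      using Q by (simp add: P)
    then show False
      using p k by (simp add: is_unit_power_iff prime_elem_not_unit)
  qed
  then have "V \<noteq> {0}"
    using op_poly_Omega_w_eq_0_iff mem_cyclic_sub[of "op_poly s Q \<Omega> w" E F H]
    by (auto simp: V_def)
  moreover have False
    if A: "is_submodule s E F H A" and B: "is_submodule s E F H B" and "A \<noteq> {0}" "B \<noteq> {0}"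
      and AB: "A \<inter> B = {0}" and V_sum: "V = {a + b | a b. a \<in> A \<and> b \<in> B}" for A B
  proof -
    have "A \<subseteq> V" "B \<subseteq> V"
      using A B by (force simp: V_sum is_submodule_def intro: subspace_0)+
    have "op_poly s Q \<Omega> w \<in> A \<or> op_poly s Q \<Omega> w \<in> B"
      using V_sum unfolding V_def by (rule cofactor_generator_in_direct_summand[OF P p coprime A B AB])
    then show False
    proof
      assume "op_poly s Q \<Omega> w \<in> A"
      then have "B \<subseteq> {0}"
        using \<open>B \<subseteq> V\<close> A AB unfolding V_def by (intro cyclic_sub_disjoint_subset_zero) auto
      then show False
        using \<open>B \<noteq> {0}\<close> AB by blast
    next
      assume "op_poly s Q \<Omega> w \<in> B"
      then have "A \<subseteq> {0}"
        using \<open>A \<subseteq> V\<close> B AB unfolding V_def by (intro cyclic_sub_disjoint_subset_zero)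
      then show False
        using \<open>A \<noteq> {0}\<close> AB by blast
    qed
  qed
  moreover have "is_submodule s E F H V"
    unfolding V_def by (rule is_submodule_cyclic_sub)
  ultimately show ?thesis
    unfolding indecomposable_sub_def V_def[symmetric] by blast
qed

lemma internal_direct_sum_cyclic_cofactors:
  assumes P: "P = (\<Prod>i<m. q i)"
    and coprime: "\<And>i j. i < m \<Longrightarrow> j < m \<Longrightarrow> i \<noteq> j \<Longrightarrow> coprime (q i) (q j)"
  shows "internal_direct_sum m (\<lambda>i. cyclic_sub s E F H (op_poly s (\<Prod>j\<in>{..<m} - {i}. q j) \<Omega> w))"
proof -
  define Q where "Q i = (\<Prod>j\<in>{..<m} - {i}. q j)" for i
  have P_split: "P = q i * Q i" if "i < m" for i
    using that by (simp add: P Q_def prod.remove)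
  obtain a where "P dvd (\<Sum>i<m. a i * Q i) - 1"
  proof (cases "m = 0")
    case True
    then show ?thesis
      using that by (simp add: P)
  next
    case False
    then obtain a where "(\<Sum>i<m. a i * Q i) = 1"
      using coprime_cofactors_bezout[of "{..<m}" q] coprime unfolding Q_def by auto
    then show ?thesis
      by (intro that[of a]) simp
  qed
  then have "op_poly s ((\<Sum>i<m. a i * Q i) - 1) \<Omega> v = 0" for v
    using annihilator by blast
  then have decomposition: "(\<Sum>i<m. op_poly s (a i * Q i) \<Omega> v) = v" for v
    by (simp add: op_poly_diff[OF linear_Omega] op_poly_sum[OF linear_Omega])
  show ?thesis
    unfolding Q_def[symmetric]
  proof (rule internal_direct_sumI_projections)
    show "Vector_Spaces.linear s s (op_poly s (a i * Q i) \<Omega>)" for i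
      by (rule linear_op_poly[OF linear_Omega])
    show "(\<Sum>i<m. op_poly s (a i * Q i) \<Omega> v) = v" for v
      by (rule decomposition)
    show "op_poly s (a i * Q i) \<Omega> v \<in> cyclic_sub s E F H (op_poly s (Q i) \<Omega> w)" for i v
      by (rule op_poly_Omega_mem_submodule_of_w[OF is_submodule_cyclic_sub])
         (simp add: op_poly_mult[OF linear_Omega]
          op_poly_Omega_mem_submodule[OF is_submodule_cyclic_sub mem_cyclic_sub])
    show "op_poly s (a i * Q i) \<Omega> x = 0"
      if "i < m" "j < m" "i \<noteq> j" "x \<in> cyclic_sub s E F H (op_poly s (Q j) \<Omega> w)" for i j x
    proof (rule op_poly_Omega_kills_cyclic_sub[OF P_split[OF \<open>j < m\<close>] _ \<open>x \<in> _\<close>])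
      show "q j dvd a i * Q i"
        using that by (auto simp: Q_def intro!: dvd_mult dvd_prodI)
    qed
  qed
qed

end

end

theorem mainTheorem10:
  fixes s :: "complex \<Rightarrow> 'v::ab_group_add \<Rightarrow> 'v"
    and f u :: "complex poly"
    and E F H :: "'v \<Rightarrow> 'v"
    and c :: complex and w :: 'v
    and m :: nat and p :: "nat \<Rightarrow> complex poly" and n :: "nat \<Rightarrow> nat" and P :: "complex poly"
  assumes fu: "f = smult (1/2) (pcompose u [:1, 1:] - u)"
    and Rmod: "R_module s f E F H"
    and c_nz: "c \<noteq> 0"
    and whit: "E w = s c w"
    and cyc: "cyclic_sub s E F H w = UNIV"
    and ZV: "\<forall>q. (\<forall>v. op_poly s q (Omega_op s u E F H) v = 0) \<longleftrightarrow> P dvd q"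
    and P_def: "P = (\<Prod>i<m. p i ^ n i)"
    and irr: "\<forall>i<m. irreducible (p i)"
    and nonassoc: "\<forall>i<m. \<forall>j<m. i \<noteq> j \<longrightarrow> \<not> (p i dvd p j \<and> p j dvd p i)"
    and n_pos: "\<forall>i<m. n i \<ge> 1"
  shows "(\<forall>i<m. indecomposable_sub s E F H
            (cyclic_sub s E F H
               (op_poly s (\<Prod>j\<in>{..<m} - {i}. p j ^ n j) (Omega_op s u E F H) w)))
       \<and> internal_direct_sum m (\<lambda>i. cyclic_sub s E F H
               (op_poly s (\<Prod>j\<in>{..<m} - {i}. p j ^ n j) (Omega_op s u E F H) w))"
proof -
  interpret Rf_whittaker_module s f u E F H c w
    using Rmod fu c_nz whit cyc
    by (simp add: Rf_whittaker_module_def Rf_whittaker_module_axioms_def Rf_module_def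
        Rf_module_axioms_def complex_vector_space_def R_module_def)
  have prime: "prime_elem (p i)" if "i < m" for i
    using irr that by (simp add: prime_elem_iff_irreducible)
  have coprime: "coprime (p i ^ n i) (p j ^ n j)" if "i < m" "j < m" "i \<noteq> j" for i j
  proof -
    have "coprime (p i) (p j)"
      using irr nonassoc that by (intro irreducible_not_associated_imp_coprime) auto
    then show ?thesis
      by simp
  qed
  have "indecomposable_sub s E F H
      (cyclic_sub s E F H (op_poly s (\<Prod>j\<in>{..<m} - {i}. p j ^ n j) (Omega_op s u E F H) w))"
    if i: "i < m" for i
  proof (rule indecomposable_cyclic_sub_cofactor[OF ZV _ prime[OF i]])
    show "P = p i ^ n i * (\<Prod>j\<in>{..<m} - {i}. p j ^ n j)"
      using i by (simp add: P_def prod.remove)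
    show "n i \<noteq> 0"
      using n_pos i by fastforce
    show "coprime (p i ^ n i) (\<Prod>j\<in>{..<m} - {i}. p j ^ n j)"
      by (rule prod_coprime_right, rule coprime) (use i in auto)
    show "(\<Prod>j\<in>{..<m} - {i}. p j ^ n j) \<noteq> 0"
      using prime by (auto simp: prime_elem_def)
  qed
  moreover have "internal_direct_sum m (\<lambda>i. cyclic_sub s E F H
      (op_poly s (\<Prod>j\<in>{..<m} - {i}. p j ^ n j) (Omega_op s u E F H) w))"
    by (rule internal_direct_sum_cyclic_cofactors[OF ZV P_def coprime])
  ultimately show ?thesis
    by blast
qed

end
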